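(* Let $B$ be a real $Q\times Q$ matrix that is symmetric, positive definite, and satisfies $B_{pq}\le0$ for $p\ne q$, and assume $\rho\in\mathcal R(\mathcal S^e,\pi^e,e\in\mathcal E)$. Let $(t_c)_{c\ge1}$ be an increasing unbounded sequence of times with $\lim_{c\to\infty}X(t_c)/t_c=\eta\ne0$. Let $(s_c)_{c\ge1}$ be times satisfying: 1. $s_c<t_c$ for each $c$, and $\lim_{c\to\infty}(t_c-s_c)/t_c=\epsilon\in(0,1)$; 2. for each $c$ and almost every $t\in(s_c,t_c]$, the applied service vector satisfies $\langle S(t),B\eta\rangle=\max_{S'\in\mathcal S^{e(t)}}\langle S',B\eta\rangle$. Then there is a subsequence $(s_d)$ of $(s_c)$ along which $X(s_d)/s_d\to\psi$ for some $\psi\in\mathbb R^Q_{\ge0}$ with $\langle\psi,B\eta\rangle>\langle\eta,B\eta\rangle$ and $\langle\psi,B\psi\rangle>\langle\eta,B\eta\rangle$. In particular, $$\limsup_{t\to\infty}\Big\langle\frac{X(t)}{t},B\frac{X(t)}{t}\Big\rangle>\langle\eta,B\eta\rangle .$$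
   Context: Fix integers $Q\ge1$ and $E\ge1$; queues are indexed by $q\in\mathcal Q=\{1,\dots,Q\}$ and environment states by $e\in\mathcal E=\{1,\dots,E\}$. For each $e$, $\mathcal S^e\subset\mathbb R^Q$ is a finite nonempty complete set of service vectors (components may be negative). Complete means that if $S\in\mathcal S^e$ and $S_q>0$, then replacing $S_q$ by $0$ gives a vector in $\mathcal S^e$. An environment trace is a measurable map $e:[0,\infty)\to\mathcal E$ with time proportions $\pi^e=\lim_{t\to\infty}\frac1t\int_0^t\mathbf 1\{e(z)=e\}\,dz>0$, where $\sum_e\pi^e=1$. The cumulative arrival $N(t)\in\mathbb R^Q_{\ge0}$ is componentwise nondecreasing with left limits, with traffic load $\rho=\lim_{t\to\infty}N(t)/t$. A schedule is a measurable map $S:[0,\infty)\to\mathbb R^Q$ with $S(t)\in\mathcal S^{e(t)}$. The workload is $X(t)=X(0)+N(t)-\int_0^tS(z)\,dz\ge0$. The stability region is $$\mathcal R(\mathcal S^e,\pi^e,e\in\mathcal E)=\Big\{\rho\in\mathbb R^Q_{\ge0}:\rho\le\sum_e\pi^e\sum_{S\in\mathcal S^e}\phi^e_SS \text{ for some } \phi^e_S\ge0,\ \sum_{S\in\mathcal S^e}\phi^e_S=1\Big\},$$ where the inequality is componentwise. *)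

theory Defs
  imports "HOL-Analysis.Analysis"
begin

definition complete_service_set :: "(real^'q) set \<Rightarrow> bool" where
  "complete_service_set A \<longleftrightarrow>
     (\<forall>S\<in>A. \<forall>q. S $ q > 0 \<longrightarrow> (\<chi> i. if i = q then 0 else S $ i) \<in> A)"

definition stab_region :: "('e::finite \<Rightarrow> (real^'q) set) \<Rightarrow> ('e \<Rightarrow> real) \<Rightarrow> (real^'q) set" where
  "stab_region Sset \<pi> =
     {\<rho>. (\<forall>i. 0 \<le> \<rho> $ i) \<and>
          (\<exists>\<phi> :: 'e \<Rightarrow> real^'q \<Rightarrow> real.
             (\<forall>e. \<forall>S\<in>Sset e. 0 \<le> \<phi> e S) \<and>
             (\<forall>e. (\<Sum>S\<in>Sset e. \<phi> e S) = 1) \<and>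
             (\<forall>i. \<rho> $ i \<le> (\<Sum>e\<in>UNIV. \<pi> e * (\<Sum>S\<in>Sset e. \<phi> e S * S $ i))))}"

end

theory Submission imports Defs begin

(* Put w = B eta and let m_e = max over S in S^e of <S, w> be the best drift in the direction w
   available in environment state e.  On (s_c, t_c] the schedule is max-weight for w, so the
   workload equation X(t) = X(0) + N(t) - int S gives the exact increment identity
     <X(t_c) - X(s_c), w> = <N(t_c) - N(s_c), w> - sum_e m_e (occ_e(t_c) - occ_e(s_c)),
   where occ_e(T) is the time spent in state e up to T.  The fluid scaling X(T)/T is bounded, so
   along a subsequence X(s_c)/s_c tends to some psi >= 0.  Dividing the identity by t_c and
   passing to the limit (s_c/t_c -> 1 - eps) gives
     <eta, w> - (1 - eps) <psi, w> = eps (<rho, w> - sum_e pi_e m_e) <= 0,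
   the last step because completeness of the service sets lets every rho in the stability region
   be dominated in the direction w by the averaged maximal drift.  As <eta, w> > 0 this forces
   <psi, w> > <eta, w>, and positive definiteness of B upgrades it to <psi, B psi> > <eta, B eta>. *)

definition occupation :: "(real \<Rightarrow> 'e) \<Rightarrow> 'e \<Rightarrow> real \<Rightarrow> real" where
  "occupation env e T = integral {0..T} (\<lambda>z. if env z = e then 1 else 0)"

lemma integrable_on_bounded_measurable:
  fixes f :: "real \<Rightarrow> 'b::euclidean_space"
  assumes f: "f \<in> borel_measurable (restrict_space lborel {0..})"
    and bound: "\<And>z. 0 \<le> z \<Longrightarrow> norm (f z) \<le> K" and a: "0 \<le> a"
  shows "f integrable_on {a..b}"
proof (rule measurable_bounded_by_integrable_imp_integrable[where g="\<lambda>_. K"])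
  have "f \<in> borel_measurable (restrict_space lborel {a..b})"
    using measurable_restrict_mono[OF f] a by auto
  moreover have "id \<in> restrict_space lebesgue {a..b} \<rightarrow>\<^sub>M restrict_space lborel {a..b}"
    by (rule measurable_restrict_space3) (auto intro!: measurable_completion)
  ultimately show "f \<in> borel_measurable (lebesgue_on {a..b})"
    using measurable_comp by (metis comp_id id_comp)
  show "(\<lambda>_. K) integrable_on {a..b}" by (rule integrable_const_ivl)
  show "norm (f x) \<le> K" if "x \<in> {a..b}" for x using bound a that by auto
qed auto

lemma environment_indicator_integrable:
  fixes env :: "real \<Rightarrow> 'e"
  assumes env_meas: "env \<in> measurable (restrict_space lborel {0..}) (count_space UNIV)"
    and "0 \<le> a"
  shows "(\<lambda>z. if env z = e then 1 else (0::real)) integrable_on {a..b}"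
proof -
  have "(\<lambda>x. if x = e then 1 else (0::real)) \<in> count_space UNIV \<rightarrow>\<^sub>M borel" by simp
  from measurable_compose[OF env_meas this]
  have "(\<lambda>z. if env z = e then 1 else (0::real)) \<in> borel_measurable (restrict_space lborel {0..})"
    by simp
  then show ?thesis
    by (rule integrable_on_bounded_measurable[where K=1]) (simp_all add: \<open>0 \<le> a\<close>)
qed

lemma occupation_increment:
  fixes env :: "real \<Rightarrow> 'e"
  assumes env_meas: "env \<in> measurable (restrict_space lborel {0..}) (count_space UNIV)"
    and "0 \<le> a" "a \<le> b"
  shows "integral {a..b} (\<lambda>z. if env z = e then 1 else 0) = occupation env e b - occupation env e a"
  using Henstock_Kurzweil_Integration.integral_combine[OF assms(2,3)
      environment_indicator_integrable[OF env_meas order_refl, of e b]]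
  unfolding occupation_def by (metis add_diff_cancel_left')

lemma feasible_schedule_bounded:
  fixes Sset :: "'e::finite \<Rightarrow> (real^'q::finite) set" and S :: "real \<Rightarrow> real^'q"
  assumes "\<And>e. finite (Sset e)" and "\<And>T. 0 \<le> T \<Longrightarrow> S T \<in> Sset (env T)"
  obtains M where "\<And>T. 0 \<le> T \<Longrightarrow> norm (S T) \<le> M"
proof
  fix T :: real assume "0 \<le> T"
  have "finite (\<Union>e. Sset e)" using assms(1) by simp
  moreover have "S T \<in> (\<Union>e. Sset e)" using assms(2)[OF \<open>0 \<le> T\<close>] by blast
  ultimately show "norm (S T) \<le> Max (norm ` (\<Union>e. Sset e))"
    by (intro Max_ge finite_imageI imageI)
qed

lemma maxweight_increment:
  fixes Sset :: "'e::finite \<Rightarrow> (real^'q::finite) set" and env :: "real \<Rightarrow> 'e"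
    and X N S :: "real \<Rightarrow> real^'q"
  assumes env_meas: "env \<in> measurable (restrict_space lborel {0..}) (count_space UNIV)"
    and S_int: "\<And>a b. 0 \<le> a \<Longrightarrow> S integrable_on {a..b}"
    and X_def: "\<And>T. 0 \<le> T \<Longrightarrow> X T = X 0 + N T - integral {0..T} S"
    and ab: "0 \<le> a" "a \<le> b"
    and maxweight: "AE T in lborel. T \<in> {a<..b} \<longrightarrow>
                      S T \<bullet> w = Max ((\<lambda>S'. S' \<bullet> w) ` Sset (env T))"
  shows "(X b - X a) \<bullet> w = (N b - N a) \<bullet> w -
           (\<Sum>e\<in>UNIV. Max ((\<lambda>S'. S' \<bullet> w) ` Sset e) * (occupation env e b - occupation env e a))"
proof -
  define m where "m e = Max ((\<lambda>S'. S' \<bullet> w) ` Sset e)" for e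
  define ind where "ind e = (\<lambda>z. if env z = e then 1 else (0::real))" for e
  have "integral {a..b} S = integral {0..b} S - integral {0..a} S"
    using Henstock_Kurzweil_Integration.integral_combine[OF ab S_int[OF order_refl]]
    by (simp add: algebra_simps)
  then have X_incr: "X b - X a = N b - N a - integral {a..b} S"
    using X_def[of a] X_def[of b] ab by simp
  obtain Z where Z_sub: "{T \<in> space lborel. \<not> (T \<in> {a<..b} \<longrightarrow>
                   S T \<bullet> w = Max ((\<lambda>S'. S' \<bullet> w) ` Sset (env T)))} \<subseteq> Z"
    and Z_null: "emeasure lborel Z = 0" "Z \<in> sets lborel"
    by (rule AE_E[OF maxweight])
  have "integral {a..b} S \<bullet> w = integral {a..b} (\<lambda>z. S z \<bullet> w)"
    using integral_linear[OF S_int[OF ab(1)] bounded_linear_inner_left[of w]] by (simp add: o_def)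
  also have "\<dots> = integral {a..b} (\<lambda>z. m (env z))"
  proof (rule integral_spike[of "Z \<union> {a}"])
    show "negligible (Z \<union> {a})"
      using null_setsI[OF Z_null] by (simp add: negligible_iff_null_sets null_sets_completionI)
    fix x assume "x \<in> {a..b} - (Z \<union> {a})"
    then have "x \<in> {a<..b}" "x \<notin> Z" by auto
    then show "m (env x) = S x \<bullet> w" using Z_sub unfolding m_def by auto
  qed
  also have "(\<lambda>z. m (env z)) = (\<lambda>z. \<Sum>e\<in>UNIV. m e * ind e z)"
    by (rule ext) (simp add: ind_def if_distrib sum.delta' cong: if_cong)
  also have "integral {a..b} \<dots> = (\<Sum>e\<in>UNIV. integral {a..b} (\<lambda>z. m e * ind e z))"
    using environment_indicator_integrable[OF env_meas ab(1)]
    by (intro integral_sum integrable_on_mult_right) (simp_all add: ind_def)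
  also have "\<dots> = (\<Sum>e\<in>UNIV. m e * (occupation env e b - occupation env e a))"
    using occupation_increment[OF env_meas ab] by (simp add: ind_def)
  finally show ?thesis
    using X_incr by (simp add: inner_diff_left m_def)
qed

lemma fluid_scaling_bounded:
  fixes X N S :: "real \<Rightarrow> real^'q::finite"
  assumes X_def: "\<And>T. 0 \<le> T \<Longrightarrow> X T = X 0 + N T - integral {0..T} S"
    and S_bound: "\<And>T. 0 \<le> T \<Longrightarrow> norm (S T) \<le> M"
    and S_int: "\<And>T. S integrable_on {0..T}"
    and load: "((\<lambda>T. N T /\<^sub>R T) \<longlongrightarrow> \<rho>) at_top"
    and u: "filterlim u at_top sequentially"
  shows "Bseq (\<lambda>n. X (u n) /\<^sub>R u n)"
proof -
  have "0 \<le> M" using S_bound[of 0] norm_ge_zero order_trans by blast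
  have bound: "norm (X T /\<^sub>R T) \<le> norm (X 0) + norm (N T /\<^sub>R T) + M" if "1 \<le> T" for T
  proof -
    have "norm (integral {0..T} S) \<le> M * T"
      using has_integral_bound[of M S "integral {0..T} S" 0 T] \<open>0 \<le> M\<close>
        integrable_integral[OF S_int[of T]] S_bound that
      by (simp add: content_real)
    moreover have "norm (integral {0..T} S /\<^sub>R T) = norm (integral {0..T} S) / T"
      using that by (simp add: divide_inverse_commute)
    ultimately have "norm (integral {0..T} S /\<^sub>R T) \<le> M"
      using that by (simp add: pos_divide_le_eq)
    moreover have "norm (X 0 /\<^sub>R T) \<le> norm (X 0)"
      using that by (simp add: inverse_le_1_iff mult_left_le_one_le)
    moreover have "norm (X T /\<^sub>R T)
               \<le> norm (X 0 /\<^sub>R T) + norm (N T /\<^sub>R T) + norm (integral {0..T} S /\<^sub>R T)"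
    proof -
      have decomp: "X T /\<^sub>R T = X 0 /\<^sub>R T + N T /\<^sub>R T - integral {0..T} S /\<^sub>R T"
        using that by (subst X_def) (simp_all add: scaleR_diff_right scaleR_add_right)
      show ?thesis unfolding decomp
        using norm_triangle_ineq4[of "X 0 /\<^sub>R T + N T /\<^sub>R T" "integral {0..T} S /\<^sub>R T"]
          norm_triangle_ineq[of "X 0 /\<^sub>R T" "N T /\<^sub>R T"] by linarith
    qed
    ultimately show ?thesis by linarith
  qed
  have "eventually (\<lambda>T. 1 \<le> T \<and> norm (N T /\<^sub>R T) < norm \<rho> + 1) at_top"
    using order_tendstoD(2)[OF tendsto_norm[OF load], of "norm \<rho> + 1"]
    by (simp add: eventually_conj eventually_ge_at_top)
  then have "eventually (\<lambda>n. 1 \<le> u n \<and> norm (N (u n) /\<^sub>R u n) < norm \<rho> + 1) sequentially"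
    using u unfolding filterlim_iff by blast
  then have "eventually (\<lambda>n. norm (X (u n) /\<^sub>R u n) \<le> norm (X 0) + (norm \<rho> + 1) + M) sequentially"
  proof eventually_elim
    case (elim n)
    then show ?case using bound[of "u n"] by linarith
  qed
  then have "eventually (\<lambda>n. norm (X (u n) /\<^sub>R u n) \<le> norm (norm (X 0) + (norm \<rho> + 1) + M))
               sequentially"
    by (rule eventually_mono) (simp add: \<open>0 \<le> M\<close>)
  then show ?thesis
    by (rule Bseq_eventually_mono) simp
qed

lemma lagging_times:
  fixes s t :: "nat \<Rightarrow> real"
  assumes t_pos: "\<And>n. 0 < t n" and t: "filterlim t at_top sequentially"
    and lag: "(\<lambda>n. (t n - s n) / t n) \<longlonglongrightarrow> \<epsilon>" and "\<epsilon> < 1"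
  shows "(\<lambda>n. s n / t n) \<longlonglongrightarrow> 1 - \<epsilon>" and "filterlim s at_top sequentially"
proof -
  have t_nz: "t n \<noteq> 0" for n using t_pos[of n] by simp
  have "(\<lambda>n. 1 - (t n - s n) / t n) \<longlonglongrightarrow> 1 - \<epsilon>" by (intro tendsto_diff tendsto_const lag)
  moreover have "(\<lambda>n. 1 - (t n - s n) / t n) = (\<lambda>n. s n / t n)"
    by (intro ext) (simp add: t_nz diff_divide_distrib)
  ultimately show ratio: "(\<lambda>n. s n / t n) \<longlonglongrightarrow> 1 - \<epsilon>" by simp
  have "filterlim (\<lambda>n. s n / t n * t n) at_top sequentially"
    by (rule filterlim_tendsto_pos_mult_at_top[OF ratio _ t]) (use \<open>\<epsilon> < 1\<close> in simp)
  moreover have "(\<lambda>n. s n / t n * t n) = s" using t_nz by simp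
  ultimately show "filterlim s at_top sequentially" by simp
qed

lemma increment_fluid_limit:
  fixes f :: "real \<Rightarrow> 'a::real_normed_vector"
  assumes fb: "(\<lambda>n. f (b n) /\<^sub>R b n) \<longlonglongrightarrow> \<alpha>" and fa: "(\<lambda>n. f (a n) /\<^sub>R a n) \<longlonglongrightarrow> \<beta>"
    and ratio: "(\<lambda>n. a n / b n) \<longlonglongrightarrow> \<kappa>" and a_nz: "eventually (\<lambda>n. a n \<noteq> 0) sequentially"
  shows "(\<lambda>n. (f (b n) - f (a n)) /\<^sub>R b n) \<longlonglongrightarrow> \<alpha> - \<kappa> *\<^sub>R \<beta>"
proof -
  have "(\<lambda>n. f (b n) /\<^sub>R b n - (a n / b n) *\<^sub>R (f (a n) /\<^sub>R a n)) \<longlonglongrightarrow> \<alpha> - \<kappa> *\<^sub>R \<beta>"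
    by (intro tendsto_intros fb fa ratio)
  moreover have "eventually (\<lambda>n. f (b n) /\<^sub>R b n - (a n / b n) *\<^sub>R (f (a n) /\<^sub>R a n)
                   = (f (b n) - f (a n)) /\<^sub>R b n) sequentially"
    using a_nz by eventually_elim (simp add: scaleR_diff_right divide_inverse)
  ultimately show ?thesis by (rule Lim_transform_eventually)
qed

lemma increment_identity_limit:
  fixes X N :: "real \<Rightarrow> real^'q::finite" and occ :: "'e::finite \<Rightarrow> real \<Rightarrow> real"
  assumes incr: "\<And>n. (X (b n) - X (a n)) \<bullet> w =
                   (N (b n) - N (a n)) \<bullet> w - (\<Sum>e\<in>UNIV. m e * (occ e (b n) - occ e (a n)))"
    and a: "filterlim a at_top sequentially" and b: "filterlim b at_top sequentially"
    and ratio: "(\<lambda>n. a n / b n) \<longlonglongrightarrow> \<kappa>"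
    and Xb: "(\<lambda>n. X (b n) /\<^sub>R b n) \<longlonglongrightarrow> \<eta>" and Xa: "(\<lambda>n. X (a n) /\<^sub>R a n) \<longlonglongrightarrow> \<psi>"
    and load: "((\<lambda>T. N T /\<^sub>R T) \<longlongrightarrow> \<rho>) at_top"
    and occ_rate: "\<And>e. ((\<lambda>T. (1 / T) * occ e T) \<longlongrightarrow> \<pi> e) at_top"
  shows "(\<eta> - \<kappa> *\<^sub>R \<psi>) \<bullet> w = (1 - \<kappa>) * (\<rho> \<bullet> w - (\<Sum>e\<in>UNIV. m e * \<pi> e))"
proof -
  have "eventually (\<lambda>n. 0 < a n) sequentially"
    using a by (simp add: filterlim_at_top_dense)
  then have a_nz: "eventually (\<lambda>n. a n \<noteq> 0) sequentially"
    by (rule eventually_mono) simp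
  have rate: "(\<lambda>n. f (u n) /\<^sub>R u n) \<longlonglongrightarrow> l"
    if "((\<lambda>T. f T /\<^sub>R T) \<longlongrightarrow> l) at_top" "filterlim u at_top sequentially"
    for f :: "real \<Rightarrow> 'b::real_normed_vector" and l u
    using filterlim_compose[OF that] by simp
  have occ_rate': "((\<lambda>T. occ e T /\<^sub>R T) \<longlongrightarrow> \<pi> e) at_top" for e
    using occ_rate[of e] by (simp add: divide_inverse mult.commute)
  have lim_X: "(\<lambda>n. ((X (b n) - X (a n)) /\<^sub>R b n) \<bullet> w) \<longlonglongrightarrow> (\<eta> - \<kappa> *\<^sub>R \<psi>) \<bullet> w"
    by (intro tendsto_intros increment_fluid_limit Xa Xb ratio a_nz)
  have scaled: "((X (b n) - X (a n)) /\<^sub>R b n) \<bullet> w =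
      ((N (b n) - N (a n)) /\<^sub>R b n) \<bullet> w - (\<Sum>e\<in>UNIV. m e * ((occ e (b n) - occ e (a n)) /\<^sub>R b n))"
    for n
  proof -
    have "((X (b n) - X (a n)) /\<^sub>R b n) \<bullet> w = ((X (b n) - X (a n)) \<bullet> w) / b n"
      by (simp add: divide_inverse mult.commute)
    also have "\<dots> = ((N (b n) - N (a n)) \<bullet> w) / b n
                     - (\<Sum>e\<in>UNIV. m e * (occ e (b n) - occ e (a n))) / b n"
      by (simp only: incr diff_divide_distrib)
    also have "\<dots> = ((N (b n) - N (a n)) /\<^sub>R b n) \<bullet> w
                     - (\<Sum>e\<in>UNIV. m e * ((occ e (b n) - occ e (a n)) /\<^sub>R b n))"
      by (simp add: sum_divide_distrib sum_distrib_left divide_inverse mult_ac)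
    finally show ?thesis .
  qed
  have lim_N: "(\<lambda>n. ((N (b n) - N (a n)) /\<^sub>R b n) \<bullet> w
           - (\<Sum>e\<in>UNIV. m e * ((occ e (b n) - occ e (a n)) /\<^sub>R b n)))
      \<longlonglongrightarrow> (\<rho> - \<kappa> *\<^sub>R \<rho>) \<bullet> w - (\<Sum>e\<in>UNIV. m e * (\<pi> e - \<kappa> *\<^sub>R \<pi> e))"
    by (intro tendsto_intros increment_fluid_limit rate load occ_rate' a b ratio a_nz)
  have "(\<eta> - \<kappa> *\<^sub>R \<psi>) \<bullet> w = (\<rho> - \<kappa> *\<^sub>R \<rho>) \<bullet> w - (\<Sum>e\<in>UNIV. m e * (\<pi> e - \<kappa> *\<^sub>R \<pi> e))"
    using LIMSEQ_unique[OF lim_X[unfolded scaled] lim_N] .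
  then show ?thesis
    by (simp add: algebra_simps sum_distrib_left sum_subtractf)
qed

lemma complete_zero_components:
  fixes A :: "(real^'q::finite) set"
  assumes complete: "complete_service_set A" and S: "S \<in> A"
  shows "\<exists>S'\<in>A. \<forall>q. S' $ q = (if q \<in> J \<and> S $ q > 0 then 0 else S $ q)"
proof -
  have "finite J" by simp
  then show ?thesis
  proof (induction J rule: finite_induct)
    case empty
    then show ?case using S by auto
  next
    case (insert j J)
    then obtain S' where S': "S' \<in> A" "\<forall>q. S' $ q = (if q \<in> J \<and> S $ q > 0 then 0 else S $ q)"
      by blast
    show ?case
    proof (cases "S' $ j > 0")
      case True
      let ?S'' = "\<chi> i. if i = j then 0 else S' $ i"
      have "?S'' \<in> A" using complete True S'(1) unfolding complete_service_set_def by blast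
      moreover have "\<forall>q. ?S'' $ q = (if q \<in> insert j J \<and> S $ q > 0 then 0 else S $ q)"
        using S'(2) True by (auto split: if_splits)
      ultimately show ?thesis by blast
    next
      case False
      then have "\<forall>q. S' $ q = (if q \<in> insert j J \<and> S $ q > 0 then 0 else S $ q)"
        using S'(2) by (auto split: if_splits)
      then show ?thesis using S'(1) by blast
    qed
  qed
qed

text \<open>Negative components of w are
  handled by switching off the corresponding positive service, which completeness allows.\<close>
lemma stability_region_drift_bound:
  fixes Sset :: "'e::finite \<Rightarrow> (real^'q::finite) set"
  assumes fin: "\<And>e. finite (Sset e)" and complete: "\<And>e. complete_service_set (Sset e)"
    and \<pi>_nonneg: "\<And>e. 0 \<le> \<pi> e" and \<rho>: "\<rho> \<in> stab_region Sset \<pi>"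
  shows "\<rho> \<bullet> w \<le> (\<Sum>e\<in>UNIV. \<pi> e * Max ((\<lambda>S'. S' \<bullet> w) ` Sset e))"
proof -
  define m where "m e = Max ((\<lambda>S'. S' \<bullet> w) ` Sset e)" for e
  obtain \<phi> where \<phi>_nonneg: "\<And>e S. S \<in> Sset e \<Longrightarrow> 0 \<le> \<phi> e S"
    and \<phi>_sum: "\<And>e. (\<Sum>S\<in>Sset e. \<phi> e S) = 1"
    and \<rho>_le: "\<And>i. \<rho> $ i \<le> (\<Sum>e\<in>UNIV. \<pi> e * (\<Sum>S\<in>Sset e. \<phi> e S * S $ i))"
    and \<rho>_nonneg: "\<And>i. 0 \<le> \<rho> $ i"
    using \<rho> unfolding stab_region_def by auto
  have "\<forall>e. \<forall>S\<in>Sset e. \<exists>S'\<in>Sset e. \<forall>q. S' $ q = (if q \<in> {q. w $ q < 0} \<and> S $ q > 0 then 0 else S $ q)"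
    using complete_zero_components complete by blast
  then obtain Z where Z_in: "\<And>e S. S \<in> Sset e \<Longrightarrow> Z e S \<in> Sset e"
    and Z_comp: "\<And>e S q. S \<in> Sset e \<Longrightarrow> Z e S $ q = (if w $ q < 0 \<and> S $ q > 0 then 0 else S $ q)"
    by (simp only: mem_Collect_eq) metis
  define v where "v = (\<Sum>e\<in>UNIV. \<pi> e *\<^sub>R (\<Sum>S\<in>Sset e. \<phi> e S *\<^sub>R Z e S))"
  have v_comp: "v $ i = (\<Sum>e\<in>UNIV. \<pi> e * (\<Sum>S\<in>Sset e. \<phi> e S * Z e S $ i))" for i
    by (simp add: v_def)
  have "\<rho> $ i * w $ i \<le> v $ i * w $ i" for i
  proof (cases "w $ i < 0")
    case True
    have "Z e S $ i \<le> 0" if "S \<in> Sset e" for e S using Z_comp[OF that, of i] True by auto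
    then have "v $ i \<le> 0"
      unfolding v_comp using \<phi>_nonneg \<pi>_nonneg
      by (intro sum_nonpos mult_nonneg_nonpos) (auto intro: sum_nonpos mult_nonneg_nonpos)
    then show ?thesis using True \<rho>_nonneg[of i] by (simp add: mult_le_0_iff mult_nonpos_nonpos order_trans)
  next
    case False
    then have "v $ i = (\<Sum>e\<in>UNIV. \<pi> e * (\<Sum>S\<in>Sset e. \<phi> e S * S $ i))"
      unfolding v_comp using Z_comp by simp
    then show ?thesis using \<rho>_le[of i] False by (simp add: mult_right_mono)
  qed
  then have "\<rho> \<bullet> w \<le> v \<bullet> w" by (simp add: inner_vec_def sum_mono)
  also have "v \<bullet> w = (\<Sum>e\<in>UNIV. \<pi> e * (\<Sum>S\<in>Sset e. \<phi> e S * (Z e S \<bullet> w)))"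
    by (simp add: v_def inner_sum_left)
  also have "\<dots> \<le> (\<Sum>e\<in>UNIV. \<pi> e * (\<Sum>S\<in>Sset e. \<phi> e S * m e))"
  proof (rule sum_mono, rule mult_left_mono[OF _ \<pi>_nonneg], rule sum_mono)
    fix e S assume S: "S \<in> Sset e"
    have "Z e S \<bullet> w \<le> m e" unfolding m_def using Z_in[OF S] fin by (intro Max_ge) auto
    then show "\<phi> e S * (Z e S \<bullet> w) \<le> \<phi> e S * m e" using \<phi>_nonneg[OF S] by (rule mult_left_mono)
  qed
  also have "\<dots> = (\<Sum>e\<in>UNIV. \<pi> e * m e)"
    using \<phi>_sum by (simp add: sum_distrib_right[symmetric])
  finally show ?thesis unfolding m_def .
qed

text \<open>For a symmetric positive definite B, exceeding eta in the direction B eta forces a larger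
  quadratic form: psi B psi - eta B eta = (psi - eta) B (psi - eta) + 2 (psi - eta) B eta.\<close>
lemma quadratic_form_gain:
  fixes B :: "real^'q::finite^'q"
  assumes sym: "transpose B = B" and posdef: "\<And>x. x \<noteq> 0 \<Longrightarrow> 0 < x \<bullet> (B *v x)"
    and gain: "\<eta> \<bullet> (B *v \<eta>) < \<psi> \<bullet> (B *v \<eta>)"
  shows "\<eta> \<bullet> (B *v \<eta>) < \<psi> \<bullet> (B *v \<psi>)"
proof -
  have "\<eta> \<bullet> (B *v \<psi>) = (\<eta> v* B) \<bullet> \<psi>" by (simp add: dot_lmul_matrix)
  also have "\<eta> v* B = B *v \<eta>" using vector_transpose_matrix[of \<eta> B] sym by simp
  finally have swap: "\<eta> \<bullet> (B *v \<psi>) = \<psi> \<bullet> (B *v \<eta>)" by (simp add: inner_commute)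
  have "0 \<le> (\<psi> - \<eta>) \<bullet> (B *v (\<psi> - \<eta>))" using posdef[of "\<psi> - \<eta>"] by (cases "\<psi> = \<eta>") auto
  also have "\<dots> = \<psi> \<bullet> (B *v \<psi>) - \<psi> \<bullet> (B *v \<eta>) - \<eta> \<bullet> (B *v \<psi>) + \<eta> \<bullet> (B *v \<eta>)"
    by (simp add: matrix_vector_mult_diff_distrib inner_diff_left inner_diff_right)
  finally show ?thesis using gain swap by linarith
qed

lemma Limsup_gt_sequence_limit:
  fixes f :: "real \<Rightarrow> real"
  assumes lim: "(\<lambda>n. f (u n)) \<longlonglongrightarrow> l" and u: "filterlim u at_top sequentially" and "c < l"
  shows "ereal c < Limsup at_top (\<lambda>T. ereal (f T))"
proof (rule ccontr)
  assume "\<not> ?thesis"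
  then have "Limsup at_top (\<lambda>T. ereal (f T)) \<le> ereal c" by simp
  also have "ereal c < ereal ((c + l) / 2)" using \<open>c < l\<close> by simp
  finally have "Limsup at_top (\<lambda>T. ereal (f T)) < ereal ((c + l) / 2)" .
  then have "eventually (\<lambda>T. ereal (f T) < ereal ((c + l) / 2)) at_top" by (rule Limsup_lessD)
  then have "eventually (\<lambda>n. f (u n) < (c + l) / 2) sequentially"
    using filterlim_iff u by fastforce
  moreover have "eventually (\<lambda>n. (c + l) / 2 < f (u n)) sequentially"
    using lim \<open>c < l\<close> by (intro order_tendstoD) auto
  ultimately have "eventually (\<lambda>n. False) sequentially" by eventually_elim auto
  then show False by simp
qed

lemma nonneg_convergent_subsequence:
  fixes f :: "nat \<Rightarrow> real^'q::finite"
  assumes "Bseq f" and nonneg: "\<And>n i. 0 \<le> f n $ i"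
  obtains r \<psi> where "strict_mono r" "(\<lambda>d. f (r d)) \<longlonglongrightarrow> \<psi>" "\<forall>i. 0 \<le> \<psi> $ i"
proof -
  obtain r \<psi> where r: "strict_mono r" and lim: "(\<lambda>d. f (r d)) \<longlonglongrightarrow> \<psi>"
    using bounded_imp_convergent_subsequence[of f] \<open>Bseq f\<close> by (auto simp: Bseq_eq_bounded o_def)
  have "0 \<le> \<psi> $ i" for i
    using nonneg by (intro tendsto_lowerbound[OF tendsto_vec_nth[OF lim]]) auto
  with r lim show ?thesis using that by blast
qed

lemma lagged_drift_gain:
  fixes x y d \<epsilon> :: real
  assumes eq: "y - (1 - \<epsilon>) * x = \<epsilon> * d" and "d \<le> 0" and "0 < y" and "0 < \<epsilon>" "\<epsilon> < 1"
  shows "y < x"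
proof -
  have "\<epsilon> * d \<le> 0" using \<open>d \<le> 0\<close> \<open>0 < \<epsilon>\<close> by (simp add: mult_nonneg_nonpos)
  then have lagged: "y \<le> (1 - \<epsilon>) * x" using eq by linarith
  then have "0 < (1 - \<epsilon>) * x" using \<open>0 < y\<close> by linarith
  then have "0 < \<epsilon> * x" using \<open>0 < \<epsilon>\<close> \<open>\<epsilon> < 1\<close> by (simp add: zero_less_mult_iff)
  then show ?thesis using lagged by (simp add: left_diff_distrib)
qed

theorem lemma4:
  fixes Sset :: "'e::finite \<Rightarrow> (real^'q::finite) set"
    and env :: "real \<Rightarrow> 'e"
    and \<pi> :: "'e \<Rightarrow> real"
    and N :: "real \<Rightarrow> real^'q"
    and \<rho> :: "real^'q"
    and S :: "real \<Rightarrow> real^'q"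
    and X :: "real \<Rightarrow> real^'q"
    and B :: "real^'q^'q"
    and t s :: "nat \<Rightarrow> real"
    and \<eta> :: "real^'q"
    and \<epsilon> :: real
  assumes Sset_finite: "\<And>e. finite (Sset e)"
    and Sset_nonempty: "\<And>e. Sset e \<noteq> {}"
    and Sset_complete: "\<And>e. complete_service_set (Sset e)"
    and env_meas: "env \<in> measurable (restrict_space lborel {0..}) (count_space UNIV)"
    and env_prop: "\<And>e. ((\<lambda>T. (1 / T) * integral {0..T} (\<lambda>z. if env z = e then 1 else 0)) \<longlongrightarrow> \<pi> e) at_top"
    and \<pi>_pos: "\<And>e. \<pi> e > 0"
    and \<pi>_sum: "(\<Sum>e\<in>UNIV. \<pi> e) = 1"
    and N_nonneg: "\<And>T i. 0 \<le> T \<Longrightarrow> 0 \<le> N T $ i"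
    and N_mono: "\<And>T T' i. 0 \<le> T \<Longrightarrow> T \<le> T' \<Longrightarrow> N T $ i \<le> N T' $ i"
    and N_left_lim: "\<And>T. 0 < T \<Longrightarrow> \<exists>l. (N \<longlongrightarrow> l) (at_left T)"
    and load: "((\<lambda>T. N T /\<^sub>R T) \<longlongrightarrow> \<rho>) at_top"
    and S_meas: "S \<in> borel_measurable (restrict_space lborel {0..})"
    and S_feasible: "\<And>T. 0 \<le> T \<Longrightarrow> S T \<in> Sset (env T)"
    and X_def: "\<And>T. 0 \<le> T \<Longrightarrow> X T = X 0 + N T - integral {0..T} S"
    and X_nonneg: "\<And>T i. 0 \<le> T \<Longrightarrow> 0 \<le> X T $ i"
    and B_sym: "transpose B = B"
    and B_posdef: "\<And>x. x \<noteq> 0 \<Longrightarrow> 0 < x \<bullet> (B *v x)"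
    and B_offdiag: "\<And>p q. p \<noteq> q \<Longrightarrow> B $ p $ q \<le> 0"
    and \<rho>_stab: "\<rho> \<in> stab_region Sset \<pi>"
    and t_mono: "strict_mono t"
    and t_unbounded: "filterlim t at_top sequentially"
    and t_lim: "(\<lambda>c. X (t c) /\<^sub>R t c) \<longlonglongrightarrow> \<eta>"
    and \<eta>_nz: "\<eta> \<noteq> 0"
    and s_nonneg: "\<And>c. 0 \<le> s c"
    and s_less: "\<And>c. s c < t c"
    and s_lim: "(\<lambda>c. (t c - s c) / t c) \<longlonglongrightarrow> \<epsilon>"
    and \<epsilon>_range: "0 < \<epsilon>" "\<epsilon> < 1"
    and maxweight: "\<And>c. AE T in lborel. T \<in> {s c<..t c} \<longrightarrow>
                      S T \<bullet> (B *v \<eta>) = Max ((\<lambda>S'. S' \<bullet> (B *v \<eta>)) ` Sset (env T))"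
  shows "(\<exists>r \<psi>. strict_mono r \<and> (\<forall>i. 0 \<le> \<psi> $ i) \<and>
            (\<lambda>d. X (s (r d)) /\<^sub>R s (r d)) \<longlonglongrightarrow> \<psi> \<and>
            \<psi> \<bullet> (B *v \<eta>) > \<eta> \<bullet> (B *v \<eta>) \<and>
            \<psi> \<bullet> (B *v \<psi>) > \<eta> \<bullet> (B *v \<eta>))
         \<and> Limsup at_top (\<lambda>T. ereal ((X T /\<^sub>R T) \<bullet> (B *v (X T /\<^sub>R T))))
             > ereal (\<eta> \<bullet> (B *v \<eta>))"
proof -
  define w where "w = B *v \<eta>"
  define m where "m e = Max ((\<lambda>S'. S' \<bullet> w) ` Sset e)" for e
  obtain M where S_bound: "\<And>T. 0 \<le> T \<Longrightarrow> norm (S T) \<le> M"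
    using feasible_schedule_bounded[where Sset=Sset and env=env, OF Sset_finite S_feasible] by blast
  have S_int: "\<And>a b. 0 \<le> a \<Longrightarrow> S integrable_on {a..b}"
    by (rule integrable_on_bounded_measurable[OF S_meas S_bound])
  have t_pos: "\<And>c. 0 < t c" using s_nonneg s_less by (rule le_less_trans)
  note lag = lagging_times[OF t_pos t_unbounded s_lim \<epsilon>_range(2)]
  have "Bseq (\<lambda>c. X (s c) /\<^sub>R s c)"
    by (rule fluid_scaling_bounded[OF X_def S_bound S_int[OF order_refl] load lag(2)])
  moreover have "0 \<le> (X (s c) /\<^sub>R s c) $ i" for c i
    using X_nonneg[OF s_nonneg] s_nonneg by simp
  ultimately obtain r \<psi> where r: "strict_mono r" and lim_s: "(\<lambda>d. X (s (r d)) /\<^sub>R s (r d)) \<longlonglongrightarrow> \<psi>"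
    and \<psi>_nonneg: "\<forall>i. 0 \<le> \<psi> $ i"
    by (rule nonneg_convergent_subsequence)
  have r_inf: "filterlim r sequentially sequentially" by (rule filterlim_subseq[OF r])
  have incr: "(X (t c) - X (s c)) \<bullet> w = (N (t c) - N (s c)) \<bullet> w -
                (\<Sum>e\<in>UNIV. m e * (occupation env e (t c) - occupation env e (s c)))" for c
    unfolding m_def w_def
    by (rule maxweight_increment[OF env_meas S_int X_def s_nonneg less_imp_le[OF s_less] maxweight])
  have identity: "(\<eta> - (1 - \<epsilon>) *\<^sub>R \<psi>) \<bullet> w = (1 - (1 - \<epsilon>)) * (\<rho> \<bullet> w - (\<Sum>e\<in>UNIV. m e * \<pi> e))"
    using LIMSEQ_subseq_LIMSEQ[OF lag(1) r] LIMSEQ_subseq_LIMSEQ[OF t_lim r]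
    by (intro increment_identity_limit[where a="\<lambda>d. s (r d)" and b="\<lambda>d. t (r d)", OF incr
          filterlim_compose[OF lag(2) r_inf] filterlim_compose[OF t_unbounded r_inf] _ _ lim_s load
          env_prop[folded occupation_def]]) (simp_all add: o_def)
  have region: "\<rho> \<bullet> w - (\<Sum>e\<in>UNIV. m e * \<pi> e) \<le> 0"
    using stability_region_drift_bound[OF Sset_finite Sset_complete less_imp_le[OF \<pi>_pos] \<rho>_stab]
    by (simp add: m_def mult.commute)
  have \<eta>_drift: "0 < \<eta> \<bullet> w" unfolding w_def by (rule B_posdef[OF \<eta>_nz])
  have "\<eta> \<bullet> w - (1 - \<epsilon>) * (\<psi> \<bullet> w) = \<epsilon> * (\<rho> \<bullet> w - (\<Sum>e\<in>UNIV. m e * \<pi> e))"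
    using identity by (simp add: inner_diff_left)
  then have "\<eta> \<bullet> w < \<psi> \<bullet> w" by (rule lagged_drift_gain[OF _ region \<eta>_drift \<epsilon>_range])
  then have gain: "\<eta> \<bullet> (B *v \<eta>) < \<psi> \<bullet> (B *v \<eta>)" by (simp add: w_def)
  note quad_gain = quadratic_form_gain[OF B_sym B_posdef gain]
  have "(\<lambda>d. (X (s (r d)) /\<^sub>R s (r d)) \<bullet> (B *v (X (s (r d)) /\<^sub>R s (r d)))) \<longlonglongrightarrow> \<psi> \<bullet> (B *v \<psi>)"
    by (intro tendsto_inner lim_s bounded_linear.tendsto[OF matrix_vector_mul_bounded_linear])
  from Limsup_gt_sequence_limit[OF this filterlim_compose[OF lag(2) r_inf] quad_gain]
  show ?thesis using r \<psi>_nonneg lim_s gain quad_gain by blast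
qed

end
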